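(* Let $\delta>0$, $\nu\ge\frac32+\delta$, and let $K$ be either of the following integral operators on $\mathbb R_+=(0,\infty)$, $Ku(x)=\int_0^\infty k(x,y)u(y)\,dy$: (i) $k(x,y)=\frac1{2\nu}(y/x)^{\nu}(xy)^{1/2}$ for $y\le x$ and $k(x,y)=\frac1{2\nu}(y/x)^{-\nu}(xy)^{1/2}$ for $x\le y$; or (ii) for some $\beta>0$, $k(x,y)=(xy)^{1/2}I_\nu(\beta y)K_\nu(\beta x)$ for $y\le x$ and $k(x,y)=(xy)^{1/2}I_\nu(\beta x)K_\nu(\beta y)$ for $x\le y$, with $I_\nu,K_\nu$ the modified Bessel functions. Then for every $u\in L^2(\mathbb R_+)$ with support in $[0,1]$, $Ku$ satisfies, for $x\in(0,\infty)$, \[ |Ku(x)|\le\frac C\nu\|u\|_{L^2}\,x^{-1-\delta},\qquad|(x\partial_x)Ku(x)|\le C\|u\|_{L^2}\,x^{-1-\delta}, \] with a constant $C>0$ independent of $u$ and $\nu$. *)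

theory Defs
  imports "HOL-Analysis.Analysis"
begin

definition besselI :: "real \<Rightarrow> real \<Rightarrow> real" where
  "besselI \<nu> z = (\<Sum>m. (z / 2) powr (2 * real m + \<nu>) / (fact m * Gamma (real m + \<nu> + 1)))"

text \<open>Modified Bessel function of the second kind, K_nu(z) for z > 0
  (standard integral representation, DLMF 10.32.9).\<close>
definition besselK :: "real \<Rightarrow> real \<Rightarrow> real" where
  "besselK \<nu> z = (LINT t:{0..}|lborel. exp (- z * cosh t) * cosh (\<nu> * t))"

definition kernel1 :: "real \<Rightarrow> real \<Rightarrow> real \<Rightarrow> real" where
  "kernel1 \<nu> x y =
     (if y \<le> x then 1 / (2 * \<nu>) * (y / x) powr \<nu> * sqrt (x * y)
      else 1 / (2 * \<nu>) * (y / x) powr (- \<nu>) * sqrt (x * y))"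

definition kernel2 :: "real \<Rightarrow> real \<Rightarrow> real \<Rightarrow> real \<Rightarrow> real" where
  "kernel2 \<nu> \<beta> x y =
     (if y \<le> x then sqrt (x * y) * besselI \<nu> (\<beta> * y) * besselK \<nu> (\<beta> * x)
      else sqrt (x * y) * besselI \<nu> (\<beta> * x) * besselK \<nu> (\<beta> * y))"

definition intop :: "(real \<Rightarrow> real \<Rightarrow> real) \<Rightarrow> (real \<Rightarrow> complex) \<Rightarrow> real \<Rightarrow> complex" where
  "intop k u x = (LINT y:{0<..}|lborel. complex_of_real (k x y) * u y)"

definition L2_Rplus :: "(real \<Rightarrow> complex) \<Rightarrow> bool" where
  "L2_Rplus u \<longleftrightarrow> u \<in> borel_measurable lborel \<and>
                    set_integrable lborel {0<..} (\<lambda>y. (cmod (u y))\<^sup>2)"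

definition L2norm :: "(real \<Rightarrow> complex) \<Rightarrow> real" where
  "L2norm u = sqrt (LINT y:{0<..}|lborel. (cmod (u y))\<^sup>2)"

end

theory Submission
  imports Defs
begin

text \<open>
  Both kernels are dominated by the weight \<open>w\<^sub>\<nu>(x, y) = sqrt (x y) (min x y / max x y) ^ \<nu>\<close>.
  Kernel (i) is exactly \<open>w\<^sub>\<nu> / (2 \<nu>)\<close>. For kernel (ii), the power series gives
  \<open>I\<^sub>\<nu>(z) \<le> (z/2) ^ \<nu> exp (z\<^sup>2/4) / \<Gamma>(\<nu>+1)\<close>, and the integral representation together with
  \<open>cosh t \<ge> e\<^sup>t/2\<close> gives \<open>K\<^sub>\<nu>(w) \<le> (w/2) ^ (-\<nu>) \<Gamma>(\<nu>)\<close>; so the kernel is at most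
  \<open>exp (\<beta>\<^sup>2/4) w\<^sub>\<nu> / \<nu>\<close>, the factor \<open>1/\<nu>\<close> being \<open>\<Gamma>(\<nu>)/\<Gamma>(\<nu>+1)\<close>. Applying \<open>x \<partial>\<^sub>x\<close> to either
  kernel costs a factor \<open>O(\<nu>)\<close>, which eats this \<open>1/\<nu>\<close>. For \<open>y \<le> 1\<close> and \<open>\<nu> \<ge> 3/2 + \<delta>\<close> one has
  \<open>w\<^sub>\<nu>(x, y) \<le> x ^ (-1-\<delta>)\<close>, so integrating against \<open>u\<close> and using \<open>\<integral>\<^sub>0\<^sup>1 |u| \<le> \<parallel>u\<parallel>\<^sub>2\<close> gives both
  estimates. The derivative of \<open>Ku\<close> is computed under the integral sign by dominated convergence:
  near a fixed \<open>x > 0\<close> the kernel is Lipschitz in \<open>x\<close>, uniformly in \<open>y\<close>, despite its kink on the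
  diagonal.
\<close>

section \<open>Differentiation under the integral sign\<close>

lemma has_vector_derivative_at_if_difference_quotient:
  fixes F :: "real \<Rightarrow> 'b::real_normed_vector"
  assumes "((\<lambda>h. (F (x + h) - F x) /\<^sub>R h) \<longlongrightarrow> D) (at 0)"
  shows "(F has_vector_derivative D) (at x)"
  unfolding has_vector_derivative_def has_derivative_at
proof (intro conjI)
  show "bounded_linear (\<lambda>h. h *\<^sub>R D)" by (rule bounded_linear_scaleR_left)
  have "((\<lambda>h. norm ((F (x + h) - F x) /\<^sub>R h - D)) \<longlongrightarrow> 0) (at 0)"
    using assms by (simp add: tendsto_norm_zero_iff LIM_zero_iff)
  moreover have "\<forall>\<^sub>F h in at 0.
      norm ((F (x + h) - F x) /\<^sub>R h - D) = norm (F (x + h) - F x - h *\<^sub>R D) / norm h"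
    unfolding eventually_at_filter
  proof (intro always_eventually allI impI)
    fix h :: real assume "h \<noteq> 0"
    then have "(F (x + h) - F x) /\<^sub>R h - D = inverse h *\<^sub>R (F (x + h) - F x - h *\<^sub>R D)"
      by (simp add: scaleR_diff_right)
    then show "norm ((F (x + h) - F x) /\<^sub>R h - D) = norm (F (x + h) - F x - h *\<^sub>R D) / norm h"
      by (simp add: divide_inverse mult.commute)
  qed
  ultimately show "(\<lambda>h. norm (F (x + h) - F x - h *\<^sub>R D) / norm h) \<midarrow>0\<rightarrow> 0"
    by (rule Lim_transform_eventually)
qed

lemma integral_dominated_convergence_at:
  fixes s :: "real \<Rightarrow> 'a \<Rightarrow> 'b::{banach, second_countable_topology}"
  assumes "f \<in> borel_measurable M" "\<And>t. s t \<in> borel_measurable M" "integrable M w"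
    and lim: "AE x in M. ((\<lambda>t. s t x) \<longlongrightarrow> f x) (at a)"
    and bound: "\<forall>\<^sub>F t in at a. AE x in M. norm (s t x) \<le> w x"
  shows "((\<lambda>t. integral\<^sup>L M (s t)) \<longlongrightarrow> integral\<^sup>L M f) (at a)"
  unfolding tendsto_at_iff_sequentially
proof (intro allI impI)
  fix X :: "nat \<Rightarrow> real"
  assume "\<forall>i. X i \<in> UNIV - {a}" "X \<longlonglongrightarrow> a"
  then have X: "filterlim X (at a) sequentially"
    by (simp add: filterlim_at)
  from filterlim_iff[THEN iffD1, OF X, rule_format, OF bound]
  obtain N where w: "\<And>n. N \<le> n \<Longrightarrow> AE x in M. norm (s (X n) x) \<le> w x"
    by (auto simp: eventually_sequentially)
  show "((\<lambda>t. integral\<^sup>L M (s t)) \<circ> X) \<longlonglongrightarrow> integral\<^sup>L M f"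
    unfolding o_def
  proof (rule LIMSEQ_offset, rule integral_dominated_convergence)
    show "AE x in M. norm (s (X (n + N)) x) \<le> w x" for n
      by (rule w) auto
    show "AE x in M. (\<lambda>n. s (X (n + N)) x) \<longlonglongrightarrow> f x"
      using lim
    proof eventually_elim
      fix x assume "((\<lambda>t. s t x) \<longlongrightarrow> f x) (at a)"
      then show "(\<lambda>n. s (X (n + N)) x) \<longlonglongrightarrow> f x"
        by (intro LIMSEQ_ignore_initial_segment filterlim_compose[OF _ X])
    qed
  qed (use assms in auto)
qed

lemma integrable_if_norm_diff_le:
  fixes f g :: "'a \<Rightarrow> 'b::{banach, second_countable_topology}"
  assumes "integrable M f" "integrable M w" "g \<in> borel_measurable M"
    and "\<And>t. norm (g t - f t) \<le> w t"
  shows "integrable M g"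
proof (rule Bochner_Integration.integrable_bound)
  show "integrable M (\<lambda>t. norm (f t) + w t)"
    using assms(1,2) by auto
  show "AE t in M. norm (g t) \<le> norm (norm (f t) + w t)"
  proof (rule AE_I2)
    fix t
    have "norm (g t) \<le> norm (f t) + norm (g t - f t)"
      by (rule norm_triangle_sub)
    also have "\<dots> \<le> norm (f t) + w t"
      using assms(4) by simp
    finally show "norm (g t) \<le> norm (norm (f t) + w t)"
      by simp
  qed
qed (rule assms(3))

lemma has_vector_derivative_integral:
  fixes f :: "real \<Rightarrow> 'a \<Rightarrow> 'b::{banach, second_countable_topology}"
  assumes "r > 0"
    and meas: "\<And>x. f x \<in> borel_measurable M" and "f' \<in> borel_measurable M"
    and int: "integrable M (f x0)" and "integrable M g"
    and lip: "\<And>x t. \<bar>x - x0\<bar> < r \<Longrightarrow> norm (f x t - f x0 t) \<le> \<bar>x - x0\<bar> * g t"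
    and lim: "AE t in M. ((\<lambda>h. (f (x0 + h) t - f x0 t) /\<^sub>R h) \<longlongrightarrow> f' t) (at 0)"
  shows "((\<lambda>x. integral\<^sup>L M (f x)) has_vector_derivative integral\<^sup>L M f') (at x0)"
proof (rule has_vector_derivative_at_if_difference_quotient)
  define q where "q h t = (f (x0 + h) t - f x0 t) /\<^sub>R h" for h t
  have near: "\<forall>\<^sub>F h in at 0. h \<noteq> 0 \<and> \<bar>h\<bar> < r"
    unfolding eventually_at using \<open>r > 0\<close> by auto
  have "((\<lambda>h. integral\<^sup>L M (q h)) \<longlongrightarrow> integral\<^sup>L M f') (at 0)"
  proof (rule integral_dominated_convergence_at[OF \<open>f' \<in> _\<close> _ \<open>integrable M g\<close>])
    show "q h \<in> borel_measurable M" for h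
      unfolding q_def using meas by measurable
    show "AE t in M. ((\<lambda>h. q h t) \<longlongrightarrow> f' t) (at 0)"
      using lim by (simp add: q_def)
    show "\<forall>\<^sub>F h in at 0. AE t in M. norm (q h t) \<le> g t"
      using near
    proof eventually_elim
      case (elim h)
      have "norm (q h t) \<le> g t" for t
      proof -
        have "norm (q h t) = norm (f (x0 + h) t - f x0 t) / \<bar>h\<bar>"
          by (simp add: q_def divide_inverse mult.commute)
        also have "\<dots> \<le> \<bar>h\<bar> * g t / \<bar>h\<bar>"
          using lip[of "x0 + h" t] elim by (intro divide_right_mono) auto
        finally show ?thesis using elim by simp
      qed
      then show ?case by simp
    qed
  qed
  moreover have "\<forall>\<^sub>F h in at 0.
      integral\<^sup>L M (q h) = (integral\<^sup>L M (f (x0 + h)) - integral\<^sup>L M (f x0)) /\<^sub>R h"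
    using near
  proof eventually_elim
    case (elim h)
    have "integrable M (f (x0 + h))"
      using lip[of "x0 + h"] elim
      by (intro integrable_if_norm_diff_le[OF int integrable_mult_right[OF \<open>integrable M g\<close>] meas]) simp
    then have "integral\<^sup>L M (\<lambda>t. f (x0 + h) t - f x0 t)
        = integral\<^sup>L M (f (x0 + h)) - integral\<^sup>L M (f x0)"
      using int by (rule Bochner_Integration.integral_diff)
    then show ?case
      unfolding q_def by simp
  qed
  ultimately show "((\<lambda>h. (integral\<^sup>L M (f (x0 + h)) - integral\<^sup>L M (f x0)) /\<^sub>R h)
      \<longlongrightarrow> integral\<^sup>L M f') (at 0)"
    by (rule Lim_transform_eventually)
qed

lemma abs_diff_le_of_deriv_bound:
  fixes \<phi> \<phi>' :: "real \<Rightarrow> real"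
  assumes "s \<le> t" and cont: "continuous_on {s..t} \<phi>"
    and der: "\<And>z. s < z \<Longrightarrow> z < t \<Longrightarrow> (\<phi> has_real_derivative \<phi>' z) (at z)"
    and bd: "\<And>z. s < z \<Longrightarrow> z < t \<Longrightarrow> \<bar>\<phi>' z\<bar> \<le> L"
  shows "\<bar>\<phi> t - \<phi> s\<bar> \<le> L * (t - s)"
proof (cases "s = t")
  case False
  then have "s < t" using \<open>s \<le> t\<close> by simp
  then obtain l z where z: "s < z" "z < t" "DERIV \<phi> z :> l" "\<phi> t - \<phi> s = (t - s) * l"
    using MVT[OF _ cont] der by (meson real_differentiable_def)
  have "\<bar>l\<bar> \<le> L"
    using z der[OF z(1,2)] bd[OF z(1,2)] DERIV_unique by metis
  then show ?thesis using z(4) \<open>s < t\<close> by (simp add: abs_mult mult.commute mult_right_mono)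
qed simp

lemma abs_diff_le_of_deriv_bound_except:
  fixes \<phi> \<phi>' :: "real \<Rightarrow> real"
  assumes cont: "continuous_on {a..b} \<phi>"
    and der: "\<And>z. a < z \<Longrightarrow> z < b \<Longrightarrow> z \<noteq> c \<Longrightarrow> (\<phi> has_real_derivative \<phi>' z) (at z)"
    and bd: "\<And>z. a < z \<Longrightarrow> z < b \<Longrightarrow> z \<noteq> c \<Longrightarrow> \<bar>\<phi>' z\<bar> \<le> L"
    and "s \<in> {a..b}" "t \<in> {a..b}"
  shows "\<bar>\<phi> t - \<phi> s\<bar> \<le> L * \<bar>t - s\<bar>"
proof -
  have segment: "\<bar>\<phi> t - \<phi> s\<bar> \<le> L * (t - s)"
    if "s \<le> t" "s \<in> {a..b}" "t \<in> {a..b}" "\<not> (s < c \<and> c < t)" for s t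
    by (rule abs_diff_le_of_deriv_bound[where \<phi>'=\<phi>'])
       (use that in \<open>auto intro: continuous_on_subset[OF cont] der bd\<close>)
  have ordered: "\<bar>\<phi> t - \<phi> s\<bar> \<le> L * (t - s)" if "s \<le> t" "s \<in> {a..b}" "t \<in> {a..b}" for s t
  proof (cases "s < c \<and> c < t")
    case True
    then have "c \<in> {a..b}" using that by auto
    then have "\<bar>\<phi> c - \<phi> s\<bar> \<le> L * (c - s)" "\<bar>\<phi> t - \<phi> c\<bar> \<le> L * (t - c)"
      using True that by (auto intro!: segment)
    then show ?thesis by (simp add: algebra_simps)
  qed (use that segment in auto)
  show ?thesis
    using ordered[of s t] ordered[of t s] assms(4,5) by (cases "s \<le> t") (auto simp: abs_minus_commute)
qed

lemma le_mean_square_div: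
  fixes x t :: real
  assumes "t > 0"
  shows "x \<le> t / 2 + x^2 / (2 * t)"
proof -
  have "0 \<le> (t - x)^2"
    by simp
  then show ?thesis
    using assms by (simp add: field_simps power2_eq_square)
qed

lemma L2norm_nonneg: "0 \<le> L2norm u"
  unfolding L2norm_def set_lebesgue_integral_def by (auto intro!: integral_nonneg_AE)

lemma
  assumes L2: "L2_Rplus u"
  shows set_integrable_norm_unit_interval: "set_integrable lborel {0<..1} (\<lambda>y. cmod (u y))"
    and set_integral_norm_unit_interval_le:
      "t > 0 \<Longrightarrow> (LINT y:{0<..1}|lborel. cmod (u y)) \<le> t / 2 + (L2norm u)^2 / (2 * t)"
proof -
  have [measurable]: "u \<in> borel_measurable lborel"
    using L2 by (simp add: L2_Rplus_def)
  have one: "set_integrable lborel {0<..1::real} (\<lambda>_. 1::real)"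
    by (simp add: set_integrable_def integrable_indicator_iff)
  have sq: "set_integrable lborel {0<..1} (\<lambda>y. (cmod (u y))^2)"
    using L2 by (auto simp: L2_Rplus_def intro: set_integrable_subset)
  have bound: "set_integrable lborel {0<..1} (\<lambda>y. t / 2 + (cmod (u y))^2 / (2 * t))" for t
    using set_integral_add(1)[OF set_integrable_mult_right[OF one, of "t / 2"] set_integrable_divide[OF sq]]
    by simp
  show int: "set_integrable lborel {0<..1} (\<lambda>y. cmod (u y))"
    by (rule set_integrable_bound[OF bound[of 1]])
       (use le_mean_square_div[of 1] in \<open>auto simp: set_borel_measurable_def\<close>)
  assume "t > 0"
  have "(LINT y:{0<..1}|lborel. cmod (u y)) \<le> (LINT y:{0<..1}|lborel. t / 2 + (cmod (u y))^2 / (2 * t))"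
    using \<open>t > 0\<close> by (intro set_integral_mono int bound le_mean_square_div)
  also have "\<dots> = t / 2 + (LINT y:{0<..1}|lborel. (cmod (u y))^2) / (2 * t)"
    using set_integral_add(2)[OF set_integrable_mult_right[OF one, of "t / 2"] set_integrable_divide[OF sq]]
    by (simp add: set_lebesgue_integral_def)
  also have "(LINT y:{0<..1}|lborel. (cmod (u y))^2) \<le> (LINT y:{0<..}|lborel. (cmod (u y))^2)"
    using L2 sq unfolding L2_Rplus_def set_integrable_def set_lebesgue_integral_def
    by (intro integral_mono) (auto simp: indicator_def)
  also have "\<dots> = (L2norm u)^2"
    using L2norm_nonneg[of u] by (simp add: L2norm_def)
  finally show "(LINT y:{0<..1}|lborel. cmod (u y)) \<le> t / 2 + (L2norm u)^2 / (2 * t)"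
    using \<open>t > 0\<close> by (simp add: divide_right_mono)
qed

text \<open>Cauchy-Schwarz on \<open>(0,1]\<close>, by optimising the parameter \<open>t\<close> in the previous bound.\<close>
lemma set_integral_norm_le_L2norm:
  assumes "L2_Rplus u"
  shows "(LINT y:{0<..1}|lborel. cmod (u y)) \<le> L2norm u"
proof (cases "L2norm u = 0")
  case True
  then have "(LINT y:{0<..1}|lborel. cmod (u y)) \<le> 0 + e" if "e > 0" for e
    using set_integral_norm_unit_interval_le[OF assms, of "2 * e"] that by simp
  then show ?thesis
    using True by (simp add: field_le_epsilon)
next
  case False
  then have "L2norm u > 0"
    using L2norm_nonneg[of u] by simp
  then show ?thesis
    using set_integral_norm_unit_interval_le[OF assms \<open>L2norm u > 0\<close>] by (simp add: power2_eq_square)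
qed

lemma intop_eq_set_integral_unit_interval:
  assumes "\<forall>y>1. u y = 0"
  shows "intop k u x = (LINT y:{0<..1}|lborel. complex_of_real (k x y) * u y)"
  unfolding intop_def set_lebesgue_integral_def
  using assms by (intro Bochner_Integration.integral_cong) (auto simp: indicator_def)

lemma set_integral_kernel_mult_le:
  fixes k :: "real \<Rightarrow> real"
  assumes L2: "L2_Rplus u" and [measurable]: "k \<in> borel_measurable lborel"
    and kb: "\<And>y. 0 < y \<Longrightarrow> y \<le> 1 \<Longrightarrow> \<bar>k y\<bar> \<le> B"
  shows "set_integrable lborel {0<..1} (\<lambda>y. complex_of_real (k y) * u y)"
    and "cmod (LINT y:{0<..1}|lborel. complex_of_real (k y) * u y) \<le> B * L2norm u"
proof -
  have [measurable]: "u \<in> borel_measurable lborel"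
    using L2 by (simp add: L2_Rplus_def)
  note V = set_integrable_norm_unit_interval[OF L2] set_integral_norm_le_L2norm[OF L2]
  have "B \<ge> 0"
    using kb[of 1] by simp
  have pointwise: "cmod (complex_of_real (k y) * u y) \<le> B * cmod (u y)" if "y \<in> {0<..1}" for y
    using kb[of y] that by (auto simp: norm_mult intro!: mult_right_mono)
  show int: "set_integrable lborel {0<..1} (\<lambda>y. complex_of_real (k y) * u y)"
    by (rule set_integrable_bound[OF set_integrable_mult_right[OF V(1), of B]])
       (use pointwise \<open>B \<ge> 0\<close> in \<open>auto simp: set_borel_measurable_def\<close>)
  have "cmod (LINT y:{0<..1}|lborel. complex_of_real (k y) * u y)
      \<le> (LINT y:{0<..1}|lborel. cmod (complex_of_real (k y) * u y))"
    by (rule set_integral_norm_bound[OF int])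
  also have "\<dots> \<le> (LINT y:{0<..1}|lborel. B * cmod (u y))"
    by (intro set_integral_mono pointwise set_integrable_mult_right V(1) set_integrable_norm int)
  also have "\<dots> \<le> B * L2norm u"
    using V(2) \<open>B \<ge> 0\<close> by (simp add: mult_left_mono)
  finally show "cmod (LINT y:{0<..1}|lborel. complex_of_real (k y) * u y) \<le> B * L2norm u" .
qed

lemma intop_has_vector_derivative:
  fixes k dk :: "real \<Rightarrow> real \<Rightarrow> real"
  assumes L2: "L2_Rplus u" and supp: "\<forall>y>1. u y = 0" and "r > 0"
    and [measurable]: "\<And>s. k s \<in> borel_measurable lborel" "dk x \<in> borel_measurable lborel"
    and kb: "\<And>y. 0 < y \<Longrightarrow> y \<le> 1 \<Longrightarrow> \<bar>k x y\<bar> \<le> B"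
    and cont: "\<And>y. 0 < y \<Longrightarrow> y \<le> 1 \<Longrightarrow> continuous_on {x - r..x + r} (\<lambda>s. k s y)"
    and der: "\<And>s y. 0 < y \<Longrightarrow> y \<le> 1 \<Longrightarrow> \<bar>s - x\<bar> < r \<Longrightarrow> s \<noteq> y \<Longrightarrow>
      ((\<lambda>s. k s y) has_real_derivative dk s y) (at s)"
    and dkb: "\<And>s y. 0 < y \<Longrightarrow> y \<le> 1 \<Longrightarrow> \<bar>s - x\<bar> < r \<Longrightarrow> s \<noteq> y \<Longrightarrow> \<bar>dk s y\<bar> \<le> L"
  shows "(intop k u has_vector_derivative intop dk u x) (at x)"
proof -
  have [measurable]: "u \<in> borel_measurable lborel"
    using L2 by (simp add: L2_Rplus_def)
  define f where "f s y = indicator {0<..1} y *\<^sub>R (complex_of_real (k s y) * u y)" for s y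
  define f' where "f' y = indicator {0<..1} y *\<^sub>R (complex_of_real (dk x y) * u y)" for y
  define V where "V y = indicator {0<..1} y * cmod (u y)" for y
  have V: "integrable lborel V"
    using set_integrable_norm_unit_interval[OF L2] by (simp add: set_integrable_def V_def[abs_def])
  have F: "intop k u = (\<lambda>s. integral\<^sup>L lborel (f s))" "intop dk u x = integral\<^sup>L lborel f'"
    by (simp_all add: fun_eq_iff intop_eq_set_integral_unit_interval[OF supp]
        set_lebesgue_integral_def f_def[abs_def] f'_def[abs_def])
  have lip: "norm (f s y - f x y) \<le> \<bar>s - x\<bar> * (L * V y)" if "\<bar>s - x\<bar> < r" for s y
  proof (cases "y \<in> {0<..1}")
    case True
    have "\<bar>k s y - k x y\<bar> \<le> L * \<bar>s - x\<bar>"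
      by (rule abs_diff_le_of_deriv_bound_except[where c = y and \<phi>' = "\<lambda>s. dk s y"])
         (use True that \<open>r > 0\<close> cont der dkb in \<open>auto simp: abs_less_iff\<close>)
    then have "\<bar>k s y - k x y\<bar> * cmod (u y) \<le> L * \<bar>s - x\<bar> * cmod (u y)"
      by (rule mult_right_mono) simp
    moreover have "norm (f s y - f x y) = \<bar>k s y - k x y\<bar> * cmod (u y)"
      using True by (simp add: f_def norm_mult flip: of_real_diff left_diff_distrib)
    ultimately show ?thesis
      using True by (simp add: V_def mult_ac)
  qed (simp add: f_def V_def)
  have lim: "AE y in lborel. ((\<lambda>h. (f (x + h) y - f x y) /\<^sub>R h) \<longlongrightarrow> f' y) (at 0)"
    using AE_lborel_singleton[of x]
  proof eventually_elim
    case (elim y)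
    show ?case
    proof (cases "y \<in> {0<..1}")
      case True
      then have "((\<lambda>h. (k (x + h) y - k x y) / h) \<longlongrightarrow> dk x y) (at 0)"
        using der[of y x] elim \<open>r > 0\<close> by (simp add: DERIV_def)
      then have "((\<lambda>h. complex_of_real ((k (x + h) y - k x y) / h) * u y)
          \<longlongrightarrow> complex_of_real (dk x y) * u y) (at 0)"
        by (intro tendsto_intros)
      then show ?thesis
        using True by (simp add: f_def f'_def scaleR_conv_of_real field_simps)
    qed (simp add: f_def f'_def)
  qed
  have "integrable lborel (f x)"
    using set_integral_kernel_mult_le(1)[OF L2 _ kb]
    by (simp add: set_integrable_def f_def[abs_def])
  then show ?thesis
    unfolding F
    by (intro has_vector_derivative_integral[OF \<open>r > 0\<close> _ _ _ integrable_mult_right[OF V] lip lim])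
       (simp_all add: f_def[abs_def] f'_def[abs_def])
qed

lemma norm_intop_le:
  assumes "L2_Rplus u" "\<forall>y>1. u y = 0" "k x \<in> borel_measurable lborel"
    and "\<And>y. 0 < y \<Longrightarrow> y \<le> 1 \<Longrightarrow> \<bar>k x y\<bar> \<le> B"
  shows "cmod (intop k u x) \<le> B * L2norm u"
  unfolding intop_eq_set_integral_unit_interval[OF assms(2)]
  by (rule set_integral_kernel_mult_le(2)[OF assms(1,3,4)])

lemma abs_le_powr_of_abs_mult_le_powr:
  fixes s d B a :: real
  assumes "0 < s" "\<bar>s * d\<bar> \<le> B * s powr a"
  shows "\<bar>d\<bar> \<le> B * s powr (a - 1)"
proof -
  have "\<bar>d\<bar> = \<bar>s * d\<bar> / s"
    using assms by (simp add: abs_mult)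
  also have "\<dots> \<le> B * s powr a / s"
    using assms by (simp add: divide_right_mono)
  also have "\<dots> = B * s powr (a - 1)"
    using assms powr_diff[of s a 1] by simp
  finally show ?thesis .
qed

lemma intop_decay_estimates:
  fixes k dk :: "real \<Rightarrow> real \<Rightarrow> real"
  assumes L2: "L2_Rplus u" and supp: "\<forall>y>1. u y = 0" and "x > 0" "\<delta> > 0"
    and [measurable]: "\<And>s. k s \<in> borel_measurable lborel" "\<And>s. dk s \<in> borel_measurable lborel"
    and kb: "\<And>y. 0 < y \<Longrightarrow> y \<le> 1 \<Longrightarrow> \<bar>k x y\<bar> \<le> Bk * x powr (-1-\<delta>)"
    and dkb: "\<And>s y. 0 < s \<Longrightarrow> 0 < y \<Longrightarrow> y \<le> 1 \<Longrightarrow> \<bar>s * dk s y\<bar> \<le> Bd * s powr (-1-\<delta>)"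
    and der: "\<And>s y. 0 < s \<Longrightarrow> 0 < y \<Longrightarrow> y \<le> 1 \<Longrightarrow> s \<noteq> y \<Longrightarrow>
      ((\<lambda>s. k s y) has_real_derivative dk s y) (at s)"
    and cont: "\<And>y. 0 < y \<Longrightarrow> y \<le> 1 \<Longrightarrow> continuous_on {0<..} (\<lambda>s. k s y)"
  shows "cmod (intop k u x) \<le> Bk * L2norm u * x powr (-1-\<delta>) \<and>
    (\<exists>D. (intop k u has_vector_derivative D) (at x) \<and>
      cmod (x *\<^sub>R D) \<le> Bd * L2norm u * x powr (-1-\<delta>))"
proof -
  have dk_le: "\<bar>dk s y\<bar> \<le> Bd * s powr (-2-\<delta>)" if "0 < s" "0 < y" "y \<le> 1" for s y
    using abs_le_powr_of_abs_mult_le_powr[OF that(1) dkb[OF that]] by simp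
  have "0 \<le> Bd * x powr (-1-\<delta>)"
    using dkb[OF \<open>x > 0\<close>, of 1] by (simp add: order_trans[OF abs_ge_zero])
  then have "Bd \<ge> 0"
    using \<open>x > 0\<close> by (simp add: zero_le_mult_iff)
  have D: "(intop k u has_vector_derivative intop dk u x) (at x)"
  proof (rule intop_has_vector_derivative[OF L2 supp])
    show "0 < x/2"
      using \<open>x > 0\<close> by simp
    show "\<bar>k x y\<bar> \<le> Bk * x powr (-1-\<delta>)" if "0 < y" "y \<le> 1" for y
      using kb that .
    show "continuous_on {x - x/2..x + x/2} (\<lambda>s. k s y)" if "0 < y" "y \<le> 1" for y
      using cont[OF that] by (rule continuous_on_subset) (use \<open>x > 0\<close> in auto)
    show "((\<lambda>s. k s y) has_real_derivative dk s y) (at s)"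
      if "0 < y" "y \<le> 1" "\<bar>s - x\<bar> < x/2" "s \<noteq> y" for s y
      using der[of s y] that unfolding abs_less_iff by auto
    show "\<bar>dk s y\<bar> \<le> Bd * (x/2) powr (-2-\<delta>)"
      if "0 < y" "y \<le> 1" "\<bar>s - x\<bar> < x/2" "s \<noteq> y" for s y
    proof -
      have "x/2 \<le> s"
        using that(3) unfolding abs_less_iff by linarith
      then have "Bd * s powr (-2-\<delta>) \<le> Bd * (x/2) powr (-2-\<delta>)"
        using \<open>Bd \<ge> 0\<close> \<open>x > 0\<close> \<open>\<delta> > 0\<close> by (intro mult_left_mono powr_mono2') auto
      with dk_le[of s y] that \<open>x/2 \<le> s\<close> \<open>x > 0\<close> show ?thesis
        by simp
    qed
  qed simp_all
  have "cmod (intop dk u x) \<le> Bd * x powr (-2-\<delta>) * L2norm u"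
    using dk_le[OF \<open>x > 0\<close>] by (intro norm_intop_le[OF L2 supp]) simp_all
  then have "cmod (x *\<^sub>R intop dk u x) \<le> Bd * L2norm u * (x * x powr (-2-\<delta>))"
    using \<open>x > 0\<close> mult_left_mono[of _ _ x] by (simp add: mult_ac)
  also have "x * x powr (-2-\<delta>) = x powr (-1-\<delta>)"
    using \<open>x > 0\<close> powr_mult_base[of x "-2-\<delta>"] by simp
  finally have "cmod (x *\<^sub>R intop dk u x) \<le> Bd * L2norm u * x powr (-1-\<delta>)" .
  moreover have "cmod (intop k u x) \<le> Bk * x powr (-1-\<delta>) * L2norm u"
    using kb by (intro norm_intop_le[OF L2 supp]) simp_all
  ultimately show ?thesis
    using D by (auto simp: mult_ac)
qed

section \<open>The common weight of both kernels\<close>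

definition power_weight :: "real \<Rightarrow> real \<Rightarrow> real \<Rightarrow> real" where
  "power_weight \<nu> x y = sqrt (x * y) * (min x y / max x y) powr \<nu>"

lemma power_weight_eq_powr:
  assumes "0 < s" "0 < y"
  shows "power_weight \<nu> s y =
    (if y \<le> s then y powr (\<nu> + 1/2) * s powr (1/2 - \<nu>) else s powr (\<nu> + 1/2) * y powr (1/2 - \<nu>))"
  using assms
  by (auto simp: power_weight_def min_def max_def powr_half_sqrt[symmetric] powr_def ln_mult ln_div
      exp_add[symmetric] algebra_simps)

lemma power_weight_nonneg: "0 < s \<Longrightarrow> 0 < y \<Longrightarrow> 0 \<le> power_weight \<nu> s y"
  by (simp add: power_weight_def)

lemma continuous_on_power_weight: "0 < y \<Longrightarrow> continuous_on {0<..} (\<lambda>s. power_weight \<nu> s y)"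
  unfolding power_weight_def by (intro continuous_intros) auto

lemma power_weight_le:
  assumes "0 < s" "0 < y" "y \<le> 1" "0 < \<delta>" "3/2 + \<delta> \<le> \<nu>"
  shows "power_weight \<nu> s y \<le> s powr (-1-\<delta>)"
proof -
  have small: "s \<le> s powr (-1-\<delta>)" if "s \<le> 1"
    using powr_mono2'[of "-1-\<delta>" s 1] that assms(1,4) by simp
  show ?thesis
  proof (cases "y \<le> s")
    case True
    then have eq: "power_weight \<nu> s y = y powr (\<nu> + 1/2) * s powr (1/2 - \<nu>)"
      using power_weight_eq_powr[OF assms(1,2)] by simp
    show ?thesis
    proof (cases "1 \<le> s")
      case True
      have "y powr (\<nu> + 1/2) * s powr (1/2 - \<nu>) \<le> 1 * s powr (-1-\<delta>)"
        using assms True by (intro mult_mono powr_le1 powr_mono) auto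
      then show ?thesis
        using eq by simp
    next
      case False
      have "y powr (\<nu> + 1/2) * s powr (1/2 - \<nu>) \<le> s powr (\<nu> + 1/2) * s powr (1/2 - \<nu>)"
        using assms \<open>y \<le> s\<close> by (intro mult_right_mono powr_mono2) auto
      also have "\<dots> = s"
        using assms by (simp flip: powr_add)
      finally show ?thesis
        using eq small False by simp
    qed
  next
    case False
    have "power_weight \<nu> s y = s powr (\<nu> + 1/2) * y powr (1/2 - \<nu>)"
      using power_weight_eq_powr[OF assms(1,2)] False by simp
    also have "\<dots> \<le> s powr (\<nu> + 1/2) * s powr (1/2 - \<nu>)"
      using assms False by (intro mult_left_mono powr_mono2') auto
    also have "\<dots> = s"
      using assms by (simp flip: powr_add)
    finally show ?thesis
      using small False assms by simp
  qed
qed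

section \<open>Kernel (i)\<close>

lemma kernel1_eq_power_weight:
  assumes "0 < s" "0 < y"
  shows "kernel1 \<nu> s y = power_weight \<nu> s y / (2 * \<nu>)"
proof -
  have "(y / s) powr (- \<nu>) = (s / y) powr \<nu>"
    using assms by (simp add: powr_divide powr_minus field_simps)
  then show ?thesis
    using assms by (auto simp: kernel1_def power_weight_def min_def max_def)
qed

definition dkernel1 :: "real \<Rightarrow> real \<Rightarrow> real \<Rightarrow> real" where
  "dkernel1 \<nu> s y = (if y \<le> s then 1/2 - \<nu> else \<nu> + 1/2) * kernel1 \<nu> s y / s"

lemma has_real_derivative_mult_powr:
  assumes "0 < s"
  shows "((\<lambda>t. c * t powr a) has_real_derivative a * (c * s powr a) / s) (at s)"
proof -
  have "s powr (a - 1) = s powr a / s"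
    using assms by (simp add: powr_diff)
  then show ?thesis
    using assms by (auto intro!: derivative_eq_intros)
qed

lemma kernel1_has_real_derivative:
  assumes "0 < s" "0 < y" "s \<noteq> y"
  shows "((\<lambda>s. kernel1 \<nu> s y) has_real_derivative dkernel1 \<nu> s y) (at s)"
proof -
  text \<open>On each side of the diagonal the kernel is a constant times a power of \<open>s\<close>.\<close>
  have local_powr: "((\<lambda>s. kernel1 \<nu> s y) has_real_derivative a * kernel1 \<nu> s y / s) (at s)"
    if "open S" "s \<in> S" "\<And>t. t \<in> S \<Longrightarrow> kernel1 \<nu> t y = c * t powr a" for S c a
  proof -
    have "((\<lambda>s. kernel1 \<nu> s y) has_real_derivative a * (c * s powr a) / s) (at s)"
      by (rule has_field_derivative_transform_within_open[OF has_real_derivative_mult_powr[OF assms(1)] that(1,2)])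
         (simp add: that(3))
    then show ?thesis
      using that(2,3) by simp
  qed
  show ?thesis
  proof (cases "y < s")
    case True
    have "kernel1 \<nu> t y = y powr (\<nu> + 1/2) / (2 * \<nu>) * t powr (1/2 - \<nu>)" if "t \<in> {y<..}" for t
      using that assms by (simp add: kernel1_eq_power_weight power_weight_eq_powr)
    from local_powr[OF open_greaterThan _ this] True show ?thesis
      by (simp add: dkernel1_def)
  next
    case False
    then have "s \<in> {0<..<y}"
      using assms by auto
    have "kernel1 \<nu> t y = y powr (1/2 - \<nu>) / (2 * \<nu>) * t powr (\<nu> + 1/2)" if "t \<in> {0<..<y}" for t
      using that assms by (simp add: kernel1_eq_power_weight power_weight_eq_powr)
    from local_powr[OF open_greaterThanLessThan \<open>s \<in> {0<..<y}\<close> this] False assms(3) show ?thesis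
      by (simp add: dkernel1_def)
  qed
qed

lemma continuous_on_kernel1:
  assumes "0 < y"
  shows "continuous_on {0<..} (\<lambda>s. kernel1 \<nu> s y)"
proof (rule continuous_on_eq)
  show "continuous_on {0<..} (\<lambda>s. power_weight \<nu> s y * inverse (2 * \<nu>))"
    using continuous_on_power_weight[OF assms] by (rule continuous_on_mult_right)
  show "power_weight \<nu> s y * inverse (2 * \<nu>) = kernel1 \<nu> s y" if "s \<in> {0<..}" for s
    using that assms by (simp add: kernel1_eq_power_weight field_simps)
qed

lemma kernel1_bounds:
  assumes "0 < \<delta>" "3/2 + \<delta> \<le> \<nu>" "0 < s" "0 < y" "y \<le> 1"
  shows "\<bar>kernel1 \<nu> s y\<bar> \<le> 1 / \<nu> * s powr (-1-\<delta>)"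
    and "\<bar>s * dkernel1 \<nu> s y\<bar> \<le> s powr (-1-\<delta>)"
proof -
  have "\<nu> \<ge> 1" using assms by simp
  have W: "0 \<le> power_weight \<nu> s y" "power_weight \<nu> s y \<le> s powr (-1-\<delta>)"
    using power_weight_nonneg power_weight_le assms by auto
  have k: "\<bar>kernel1 \<nu> s y\<bar> \<le> s powr (-1-\<delta>) / (2 * \<nu>)"
    using assms W \<open>\<nu> \<ge> 1\<close> by (simp add: kernel1_eq_power_weight divide_right_mono)
  also have "\<dots> \<le> 1 / \<nu> * s powr (-1-\<delta>)"
    using \<open>\<nu> \<ge> 1\<close> by (simp add: field_simps)
  finally show "\<bar>kernel1 \<nu> s y\<bar> \<le> 1 / \<nu> * s powr (-1-\<delta>)" .
  have "\<bar>s * dkernel1 \<nu> s y\<bar> \<le> (\<nu> + 1/2) * \<bar>kernel1 \<nu> s y\<bar>"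
    using assms \<open>\<nu> \<ge> 1\<close> by (auto simp: dkernel1_def abs_mult intro!: mult_right_mono)
  also have "\<dots> \<le> (\<nu> + 1/2) / (2 * \<nu>) * s powr (-1-\<delta>)"
    using mult_left_mono[OF k, of "\<nu> + 1/2"] \<open>\<nu> \<ge> 1\<close> by simp
  also have "\<dots> \<le> s powr (-1-\<delta>)"
    using \<open>\<nu> \<ge> 1\<close> by (intro mult_left_le_one_le) auto
  finally show "\<bar>s * dkernel1 \<nu> s y\<bar> \<le> s powr (-1-\<delta>)" .
qed

lemma kernel1_decay:
  assumes "\<delta> > 0" "3/2 + \<delta> \<le> \<nu>" "L2_Rplus u" "\<forall>y>1. u y = 0" "x > 0"
  shows "cmod (intop (kernel1 \<nu>) u x) \<le> 1 / \<nu> * L2norm u * x powr (-1-\<delta>) \<and>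
    (\<exists>D. (intop (kernel1 \<nu>) u has_vector_derivative D) (at x) \<and>
      cmod (x *\<^sub>R D) \<le> 1 * L2norm u * x powr (-1-\<delta>))"
proof (rule intop_decay_estimates[where dk = "dkernel1 \<nu>", OF assms(3-5,1)])
  show "kernel1 \<nu> s \<in> borel_measurable lborel" "dkernel1 \<nu> s \<in> borel_measurable lborel" for s
    unfolding dkernel1_def kernel1_def by measurable
qed (use assms kernel1_bounds kernel1_has_real_derivative continuous_on_kernel1 in auto)

section \<open>The Macdonald function \<open>K\<^sub>\<nu>\<close>\<close>

lemma nn_integral_exp_minus_exp_atLeastAtMost_le:
  fixes a p :: real and n :: nat
  assumes "a > 0" "p > 0"
  shows "(\<integral>\<^sup>+t. ennreal (indicator {0..real n} t * exp (p * t - a * exp t)) \<partial>lborel)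
    \<le> ennreal (a powr (-p) * Gamma p)"
proof -
  define f where "f r = r powr (p - 1) / exp r" for r :: real
  have subst: "(\<integral>\<^sup>+r. f r * indicator {a * exp 0..a * exp (real n)} r \<partial>lborel) =
      (\<integral>\<^sup>+t. f (a * exp t) * (a * exp t) * indicator {0..real n} t \<partial>lborel)"
    by (rule nn_integral_substitution[where g = "\<lambda>t. a * exp t" and g' = "\<lambda>t. a * exp t"])
       (use assms in \<open>auto intro!: derivative_eq_intros continuous_intros
          simp: set_borel_measurable_def f_def less_imp_le\<close>)
  have integrand: "indicator {0..real n} t * exp (p * t - a * exp t)
      = a powr (-p) * (f (a * exp t) * (a * exp t) * indicator {0..real n} t)" for t
  proof -
    have "f (a * exp t) * (a * exp t) = (a * exp t) powr p / exp (a * exp t)"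
      using assms by (simp add: f_def powr_diff field_simps)
    also have "\<dots> = a powr p * exp (p * t) / exp (a * exp t)"
      using assms by (simp add: powr_def ln_mult exp_add[symmetric] distrib_left)
    finally show ?thesis
      using assms by (simp add: exp_diff powr_minus field_simps)
  qed
  have "(\<integral>\<^sup>+t. ennreal (indicator {0..real n} t * exp (p * t - a * exp t)) \<partial>lborel)
      = (\<integral>\<^sup>+t. ennreal (a powr (-p)) * ennreal (f (a * exp t) * (a * exp t) * indicator {0..real n} t) \<partial>lborel)"
    unfolding integrand by (intro nn_integral_cong ennreal_mult') simp
  also have "\<dots> = ennreal (a powr (-p)) * (\<integral>\<^sup>+t. f (a * exp t) * (a * exp t) * indicator {0..real n} t \<partial>lborel)"
    by (rule nn_integral_cmult) (simp add: f_def)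
  also have "(\<integral>\<^sup>+t. f (a * exp t) * (a * exp t) * indicator {0..real n} t \<partial>lborel)
      \<le> (\<integral>\<^sup>+r. ennreal (indicator {0..} r * r powr (p - 1) / exp r) \<partial>lborel)"
    unfolding subst[symmetric] using assms
    by (intro nn_integral_mono) (auto simp: f_def indicator_def)
  also have "\<dots> = ennreal (Gamma p)"
    using Gamma_conv_nn_integral_real[OF assms(2)] by simp
  finally show ?thesis
    by (simp add: ennreal_mult' mult_left_mono)
qed

lemma nn_integral_exp_minus_exp_le:
  fixes a p :: real
  assumes "a > 0" "p > 0"
  shows "(\<integral>\<^sup>+t. ennreal (indicator {0..} t * exp (p * t - a * exp t)) \<partial>lborel) \<le> ennreal (a powr (-p) * Gamma p)"
proof -
  define F where "F n t = ennreal (indicator {0..real n} t * exp (p * t - a * exp t))" for n :: nat and t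
  have "incseq F"
    unfolding incseq_def le_fun_def F_def
    by (auto intro!: ennreal_leI mult_right_mono simp: indicator_def)
  have sup: "(SUP n. F n t) = ennreal (indicator {0..} t * exp (p * t - a * exp t))" for t
  proof (rule antisym)
    show "(SUP n. F n t) \<le> ennreal (indicator {0..} t * exp (p * t - a * exp t))"
      by (rule SUP_least) (auto simp: F_def indicator_def intro!: ennreal_leI)
    have "t \<le> real (nat \<lceil>t\<rceil>)"
      by linarith
    then have "ennreal (indicator {0..} t * exp (p * t - a * exp t)) \<le> F (nat \<lceil>t\<rceil>) t"
      by (simp add: F_def indicator_def)
    also have "\<dots> \<le> (SUP n. F n t)"
      by (rule SUP_upper) simp
    finally show "ennreal (indicator {0..} t * exp (p * t - a * exp t)) \<le> (SUP n. F n t)" .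
  qed
  have "(\<integral>\<^sup>+t. ennreal (indicator {0..} t * exp (p * t - a * exp t)) \<partial>lborel) = (SUP n. integral\<^sup>N lborel (F n))"
    unfolding sup[symmetric]
    by (rule nn_integral_monotone_convergence_SUP[OF \<open>incseq F\<close>]) (unfold F_def, measurable)
  also have "\<dots> \<le> ennreal (a powr (-p) * Gamma p)"
    by (rule SUP_least) (use nn_integral_exp_minus_exp_atLeastAtMost_le[OF assms] in \<open>simp add: F_def[abs_def]\<close>)
  finally show ?thesis .
qed

lemma integral_le_Gamma_if_le_exp_minus_exp:
  fixes q :: "real \<Rightarrow> real" and a p :: real
  assumes "a > 0" "p > 0" and [measurable]: "q \<in> borel_measurable lborel"
    and q0: "\<And>t. t \<ge> 0 \<Longrightarrow> 0 \<le> q t" and qb: "\<And>t. t \<ge> 0 \<Longrightarrow> q t \<le> exp (p * t - a * exp t)"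
  shows "integrable lborel (\<lambda>t. indicator {0..} t * q t)"
    and "integral\<^sup>L lborel (\<lambda>t. indicator {0..} t * q t) \<le> a powr (-p) * Gamma p"
proof -
  have le: "(\<integral>\<^sup>+t. ennreal (indicator {0..} t * q t) \<partial>lborel) \<le> ennreal (a powr (-p) * Gamma p)"
    by (rule order_trans[OF nn_integral_mono nn_integral_exp_minus_exp_le[OF assms(1,2)]])
       (auto simp: indicator_def intro!: ennreal_leI qb)
  have nn: "AE t in lborel. 0 \<le> indicator {0..} t * q t"
    by (auto simp: indicator_def q0)
  show int: "integrable lborel (\<lambda>t. indicator {0..} t * q t)"
    by (rule integrableI_nonneg[OF _ nn]) (use le in \<open>auto simp: top_unique intro: le_less_trans\<close>)
  have "ennreal (integral\<^sup>L lborel (\<lambda>t. indicator {0..} t * q t)) \<le> ennreal (a powr (-p) * Gamma p)"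
    using le by (simp add: nn_integral_eq_integral[OF int nn])
  moreover have "Gamma p \<ge> 0"
    using assms by (simp add: less_imp_le)
  ultimately show "integral\<^sup>L lborel (\<lambda>t. indicator {0..} t * q t) \<le> a powr (-p) * Gamma p"
    by (subst (asm) ennreal_le_iff) auto
qed

lemma borel_measurable_cosh_real [measurable]:
  assumes [measurable]: "f \<in> borel_measurable M"
  shows "(\<lambda>x. cosh (f x :: real)) \<in> borel_measurable M"
  unfolding cosh_field_def by measurable

lemma cosh_le_exp_real: "0 \<le> (t::real) \<Longrightarrow> cosh t \<le> exp t"
  unfolding cosh_field_def by simp

lemma exp_le_two_cosh: "exp (t::real) \<le> 2 * cosh t"
  unfolding cosh_field_def by simp

text \<open>With \<open>cosh t \<ge> e\<^sup>t/2\<close> and \<open>cosh (\<nu> t) \<le> e\<^sup>\<nu>\<^sup>t\<close>, both \<open>K\<^sub>\<nu>(w)\<close> and \<open>-K\<^sub>\<nu>'(w)\<close> are dominated by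
  integrals computed by the substitution \<open>r = (w/2) e\<^sup>t\<close>.\<close>
lemma exp_cosh_le_exp_minus_exp:
  fixes w \<nu> t :: real
  assumes "w > 0" "\<nu> \<ge> 0" "t \<ge> 0"
  shows "exp (- w * cosh t) * cosh (\<nu> * t) \<le> exp (\<nu> * t - w/2 * exp t)"
proof -
  have "exp (- w * cosh t) \<le> exp (- (w/2) * exp t)"
    using exp_le_two_cosh[of t] assms by (simp add: mult_left_mono)
  moreover have "cosh (\<nu> * t) \<le> exp (\<nu> * t)"
    using assms by (intro cosh_le_exp_real) simp
  ultimately have "exp (- w * cosh t) * cosh (\<nu> * t) \<le> exp (- (w/2) * exp t) * exp (\<nu> * t)"
    by (intro mult_mono) auto
  then show ?thesis
    by (simp add: exp_add[symmetric])
qed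

lemma besselK_eq_integral:
  "besselK \<nu> w = integral\<^sup>L lborel (\<lambda>t. indicator {0..} t * (exp (- w * cosh t) * cosh (\<nu> * t)))"
  unfolding besselK_def set_lebesgue_integral_def by simp

lemma
  assumes "w > 0" "\<nu> > 0"
  shows integrable_besselK_integrand:
      "integrable lborel (\<lambda>t. indicator {0..} t * (exp (- w * cosh t) * cosh (\<nu> * t)))"
    and besselK_le: "besselK \<nu> w \<le> (w/2) powr (-\<nu>) * Gamma \<nu>"
    and besselK_nonneg: "0 \<le> besselK \<nu> w"
proof -
  note bound = integral_le_Gamma_if_le_exp_minus_exp[of "w/2" \<nu> "\<lambda>t. exp (- w * cosh t) * cosh (\<nu> * t)"]
  show "integrable lborel (\<lambda>t. indicator {0..} t * (exp (- w * cosh t) * cosh (\<nu> * t)))"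
    using bound(1) assms exp_cosh_le_exp_minus_exp by simp
  show "besselK \<nu> w \<le> (w/2) powr (-\<nu>) * Gamma \<nu>"
    using bound(2) assms exp_cosh_le_exp_minus_exp unfolding besselK_eq_integral by simp
  show "0 \<le> besselK \<nu> w"
    unfolding besselK_eq_integral by (intro integral_nonneg_AE) (auto simp: indicator_def)
qed

definition dbesselK :: "real \<Rightarrow> real \<Rightarrow> real" where
  "dbesselK \<nu> w = - integral\<^sup>L lborel (\<lambda>t. indicator {0..} t * (cosh t * exp (- w * cosh t) * cosh (\<nu> * t)))"

lemma abs_dbesselK_le:
  assumes "w > 0" "\<nu> > 0"
  shows "\<bar>dbesselK \<nu> w\<bar> \<le> (w/2) powr (-(\<nu> + 1)) * Gamma (\<nu> + 1)"
proof -
  have "cosh t * exp (- w * cosh t) * cosh (\<nu> * t) \<le> exp ((\<nu> + 1) * t - w/2 * exp t)" if "t \<ge> 0" for t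
  proof -
    have "cosh t * (exp (- w * cosh t) * cosh (\<nu> * t)) \<le> exp t * exp (\<nu> * t - w/2 * exp t)"
      using assms that cosh_le_exp_real[OF that] exp_cosh_le_exp_minus_exp[of w \<nu> t]
      by (intro mult_mono) auto
    then show ?thesis
      by (simp add: exp_add[symmetric] algebra_simps)
  qed
  moreover have "0 \<le> integral\<^sup>L lborel (\<lambda>t. indicator {0..} t * (cosh t * exp (- w * cosh t) * cosh (\<nu> * t)))"
    by (intro integral_nonneg_AE) (auto simp: indicator_def)
  ultimately show ?thesis
    using integral_le_Gamma_if_le_exp_minus_exp(2)[of "w/2" "\<nu> + 1"
        "\<lambda>t. cosh t * exp (- w * cosh t) * cosh (\<nu> * t)"] assms
    unfolding dbesselK_def by simp
qed

lemma abs_exp_cosh_diff_le: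
  fixes w w0 t :: real
  assumes "w0 > 0" "\<bar>w - w0\<bar> < w0/2" "t \<ge> 0"
  shows "\<bar>exp (- w * cosh t) - exp (- w0 * cosh t)\<bar> \<le> \<bar>w - w0\<bar> * (exp t * exp (- (w0/4) * exp t))"
proof -
  define c where "c = cosh t"
  have "c \<ge> 1"
    unfolding c_def by (rule cosh_real_ge_1)
  have "\<bar>exp (- w * c) - exp (- w0 * c)\<bar> \<le> (c * exp (- (w0/2) * c)) * \<bar>w - w0\<bar>"
  proof (rule abs_diff_le_of_deriv_bound_except[where a = "w0/2" and b = "3 * w0/2" and c = 0
        and \<phi>' = "\<lambda>z. - c * exp (- z * c)"])
    show "continuous_on {w0/2..3 * w0/2} (\<lambda>w. exp (- w * c))"
      by (intro continuous_intros)
    show "((\<lambda>w. exp (- w * c)) has_real_derivative - c * exp (- z * c)) (at z)" for z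
      by (auto intro!: derivative_eq_intros)
    show "\<bar>- c * exp (- z * c)\<bar> \<le> c * exp (- (w0/2) * c)" if "w0/2 < z" for z
      using that \<open>c \<ge> 1\<close> by (simp add: abs_mult mult_left_mono)
    show "w0 \<in> {w0/2..3 * w0/2}" "w \<in> {w0/2..3 * w0/2}"
      using assms unfolding abs_less_iff by auto
  qed
  also have "\<dots> \<le> (exp t * exp (- (w0/4) * exp t)) * \<bar>w - w0\<bar>"
  proof -
    have "c \<le> exp t"
      unfolding c_def using assms(3) by (rule cosh_le_exp_real)
    moreover have "exp (- (w0/2) * c) \<le> exp (- (w0/4) * exp t)"
      using exp_le_two_cosh[of t] assms by (simp add: c_def mult_left_mono)
    ultimately show ?thesis
      using \<open>c \<ge> 1\<close> by (intro mult_right_mono mult_mono) auto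
  qed
  finally show ?thesis
    by (simp add: c_def mult.commute)
qed

lemma besselK_has_real_derivative:
  assumes "w0 > 0" "\<nu> > 0"
  shows "(besselK \<nu> has_real_derivative dbesselK \<nu> w0) (at w0)"
proof -
  define f where "f w t = indicator {0..} t * (exp (- w * cosh t) * cosh (\<nu> * t))" for w t :: real
  define f' where "f' t = indicator {0..} t * (- (cosh t * exp (- w0 * cosh t) * cosh (\<nu> * t)))" for t :: real
  define g where "g t = indicator {0..} t * exp ((\<nu> + 1) * t - (w0/4) * exp t)" for t :: real
  have "integrable lborel g"
    unfolding g_def using assms by (intro integral_le_Gamma_if_le_exp_minus_exp(1)[of "w0/4" "\<nu> + 1"]) auto
  moreover have "norm (f w t - f w0 t) \<le> \<bar>w - w0\<bar> * g t" if "\<bar>w - w0\<bar> < w0/2" for w t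
  proof (cases "t \<ge> 0")
    case True
    have "norm (f w t - f w0 t) = \<bar>exp (- w * cosh t) - exp (- w0 * cosh t)\<bar> * cosh (\<nu> * t)"
      using True by (simp add: f_def abs_mult left_diff_distrib[symmetric])
    also have "\<dots> \<le> (\<bar>w - w0\<bar> * (exp t * exp (- (w0/4) * exp t))) * exp (\<nu> * t)"
      using abs_exp_cosh_diff_le[OF assms(1) that True] True assms(2)
      by (intro mult_mono cosh_le_exp_real) auto
    also have "\<dots> = \<bar>w - w0\<bar> * g t"
      using True by (simp add: g_def exp_add[symmetric] algebra_simps)
    finally show ?thesis .
  qed (simp add: f_def g_def)
  moreover have "AE t in lborel. ((\<lambda>h. (f (w0 + h) t - f w0 t) /\<^sub>R h) \<longlongrightarrow> f' t) (at 0)"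
  proof (rule AE_I2)
    fix t :: real
    have "((\<lambda>w. exp (- w * cosh t)) has_real_derivative - cosh t * exp (- w0 * cosh t)) (at w0)"
      by (auto intro!: derivative_eq_intros)
    then have "((\<lambda>h. indicator {0..} t * cosh (\<nu> * t) * ((exp (- (w0 + h) * cosh t) - exp (- w0 * cosh t)) / h))
        \<longlongrightarrow> indicator {0..} t * cosh (\<nu> * t) * (- cosh t * exp (- w0 * cosh t))) (at 0)"
      unfolding DERIV_def by (intro tendsto_intros)
    then show "((\<lambda>h. (f (w0 + h) t - f w0 t) /\<^sub>R h) \<longlongrightarrow> f' t) (at 0)"
      by (simp add: f_def f'_def field_simps)
  qed
  ultimately have "((\<lambda>w. integral\<^sup>L lborel (f w)) has_vector_derivative integral\<^sup>L lborel f') (at w0)"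
    by (intro has_vector_derivative_integral[where r = "w0/2"])
       (use assms integrable_besselK_integrand in \<open>auto simp: f_def[abs_def] f'_def[abs_def]\<close>)
  moreover have "(\<lambda>w. integral\<^sup>L lborel (f w)) = besselK \<nu>" "integral\<^sup>L lborel f' = dbesselK \<nu> w0"
    by (simp_all add: fun_eq_iff besselK_eq_integral f_def[abs_def] f'_def[abs_def] dbesselK_def)
  ultimately show ?thesis
    by (simp add: has_real_derivative_iff_has_vector_derivative)
qed

lemma continuous_on_besselK: "\<nu> > 0 \<Longrightarrow> continuous_on {0<..} (besselK \<nu>)"
  by (intro continuous_at_imp_continuous_on ballI DERIV_isCont[OF besselK_has_real_derivative]) auto
section \<open>The modified Bessel function \<open>I\<^sub>\<nu>\<close>\<close>

lemma Gamma_plus1_real: "0 < (z::real) \<Longrightarrow> Gamma (z + 1) = z * Gamma z"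
  by (rule Gamma_plus1) (auto dest: nonpos_Ints_nonpos)


lemma Gamma_ge_Gamma_mult_fact:
  fixes \<nu> :: real
  assumes "\<nu> \<ge> 0"
  shows "Gamma (\<nu> + 1) * fact m \<le> Gamma (real m + \<nu> + 1)"
proof (induction m)
  case (Suc m)
  have "Gamma (real (Suc m) + \<nu> + 1) = (real m + \<nu> + 1) * Gamma (real m + \<nu> + 1)"
    using Gamma_plus1_real[of "real m + \<nu> + 1"] assms by (simp add: add_ac)
  also have "\<dots> \<ge> (real m + 1) * (Gamma (\<nu> + 1) * fact m)"
    using Suc.IH assms by (intro mult_mono) auto
  finally show ?case
    by (simp add: algebra_simps)
qed simp

definition besselI_coeff :: "real \<Rightarrow> nat \<Rightarrow> real" where
  "besselI_coeff \<nu> m = 1 / (fact m * Gamma (real m + \<nu> + 1))"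

text \<open>\<open>I\<^sub>\<nu>(z) = (z/2)\<^sup>\<nu> S\<^sub>\<nu>((z/2)\<^sup>2)\<close> with the entire function \<open>S\<^sub>\<nu>\<close> below.\<close>
definition besselI_series :: "real \<Rightarrow> real \<Rightarrow> real" where
  "besselI_series \<nu> w = (\<Sum>m. besselI_coeff \<nu> m * w ^ m)"

definition dbesselI_series :: "real \<Rightarrow> real \<Rightarrow> real" where
  "dbesselI_series \<nu> w = (\<Sum>m. diffs (besselI_coeff \<nu>) m * w ^ m)"

lemma besselI_coeff_bounds:
  assumes "\<nu> \<ge> 0"
  shows "0 \<le> besselI_coeff \<nu> m" "besselI_coeff \<nu> m \<le> inverse (Gamma (\<nu> + 1)) * inverse (fact m)"
    "0 \<le> diffs (besselI_coeff \<nu>) m" "diffs (besselI_coeff \<nu>) m \<le> inverse (Gamma (\<nu> + 1)) * inverse (fact m)"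
proof -
  have G: "Gamma (\<nu> + 1) > 0" "Gamma (real k + \<nu> + 1) > 0" for k
    using assms by auto
  have "Gamma (\<nu> + 1) \<le> Gamma (real k + \<nu> + 1)" for k
  proof -
    have "Gamma (\<nu> + 1) * 1 \<le> Gamma (\<nu> + 1) * fact k"
      using G by (intro mult_left_mono) auto
    then show ?thesis
      using Gamma_ge_Gamma_mult_fact[OF assms, of k] by simp
  qed
  then have le: "1 / (fact m * Gamma (real k + \<nu> + 1)) \<le> inverse (Gamma (\<nu> + 1)) * inverse (fact m)" for k
    using G by (simp add: field_simps divide_le_eq mult_left_mono)
  have d: "diffs (besselI_coeff \<nu>) m = 1 / (fact m * Gamma (real (Suc m) + \<nu> + 1))"
    unfolding diffs_def besselI_coeff_def by (simp add: fact_Suc del: of_nat_Suc)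
  show "0 \<le> besselI_coeff \<nu> m"
    using G(2)[of m] by (simp add: besselI_coeff_def)
  show "besselI_coeff \<nu> m \<le> inverse (Gamma (\<nu> + 1)) * inverse (fact m)"
    using le[of m] by (simp add: besselI_coeff_def)
  show "0 \<le> diffs (besselI_coeff \<nu>) m" "diffs (besselI_coeff \<nu>) m \<le> inverse (Gamma (\<nu> + 1)) * inverse (fact m)"
    using G(2)[of "Suc m"] le[of "Suc m"] unfolding d by (simp_all del: of_nat_Suc)
qed

lemma power_series_le_exp:
  fixes c :: "nat \<Rightarrow> real"
  assumes c0: "\<And>m. 0 \<le> c m" and cb: "\<And>m. c m \<le> B * inverse (fact m)"
  shows "summable (\<lambda>m. c m * w ^ m)"
    and "0 \<le> w \<Longrightarrow> 0 \<le> (\<Sum>m. c m * w ^ m)"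
    and "0 \<le> w \<Longrightarrow> (\<Sum>m. c m * w ^ m) \<le> B * exp w"
proof -
  have exp_series: "summable (\<lambda>m. B * (inverse (fact m) * x ^ m))" for x :: real
    by (intro summable_mult summable_exp)
  show sm: "summable (\<lambda>m. c m * w ^ m)"
  proof (rule summable_comparison_test'[OF exp_series[of "\<bar>w\<bar>"]])
    fix m :: nat
    have "norm (c m * w ^ m) = c m * \<bar>w\<bar> ^ m"
      using c0[of m] by (simp add: abs_mult power_abs)
    also have "\<dots> \<le> B * inverse (fact m) * \<bar>w\<bar> ^ m"
      by (intro mult_right_mono cb) simp
    finally show "norm (c m * w ^ m) \<le> B * (inverse (fact m) * \<bar>w\<bar> ^ m)"
      by (simp add: mult_ac)
  qed
  assume "0 \<le> w"
  show "0 \<le> (\<Sum>m. c m * w ^ m)"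
    by (intro suminf_nonneg sm) (use c0 \<open>0 \<le> w\<close> in simp)
  have "(\<Sum>m. c m * w ^ m) \<le> (\<Sum>m. B * (inverse (fact m) * w ^ m))"
    using cb \<open>0 \<le> w\<close> by (intro suminf_le sm exp_series) (simp add: mult_right_mono flip: mult.assoc)
  also have "\<dots> = B * exp w"
    by (simp add: suminf_mult[OF summable_exp] exp_def scaleR_conv_of_real divide_inverse mult.commute)
  finally show "(\<Sum>m. c m * w ^ m) \<le> B * exp w" .
qed

lemma summable_besselI_series: "\<nu> \<ge> 0 \<Longrightarrow> summable (\<lambda>m. besselI_coeff \<nu> m * w ^ m)"
  using power_series_le_exp(1)[OF besselI_coeff_bounds(1,2)] .

lemma besselI_series_bounds:
  assumes "\<nu> \<ge> 0" "0 \<le> w"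
  shows "0 \<le> besselI_series \<nu> w" "besselI_series \<nu> w \<le> exp w / Gamma (\<nu> + 1)"
    and "0 \<le> dbesselI_series \<nu> w" "dbesselI_series \<nu> w \<le> exp w / Gamma (\<nu> + 1)"
  using power_series_le_exp(2,3)[OF besselI_coeff_bounds(1,2)[OF assms(1)] assms(2)]
    power_series_le_exp(2,3)[OF besselI_coeff_bounds(3,4)[OF assms(1)] assms(2)]
  unfolding besselI_series_def dbesselI_series_def by (simp_all add: divide_inverse mult.commute)

lemma besselI_series_has_real_derivative:
  assumes "\<nu> \<ge> 0"
  shows "(besselI_series \<nu> has_real_derivative dbesselI_series \<nu> w) (at w)"
  unfolding besselI_series_def[abs_def] dbesselI_series_def
  by (rule termdiffs_strong[OF summable_besselI_series[OF assms, of "\<bar>w\<bar> + 1"]]) simp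

lemma besselI_eq_series:
  assumes "z > 0" "\<nu> \<ge> 0"
  shows "besselI \<nu> z = (z/2) powr \<nu> * besselI_series \<nu> ((z/2)^2)"
proof -
  have "(z/2) powr (2 * real m + \<nu>) / (fact m * Gamma (real m + \<nu> + 1))
      = (z/2) powr \<nu> * (besselI_coeff \<nu> m * ((z/2)^2) ^ m)" for m
    using assms powr_realpow[of "z/2" "2 * m"]
    by (simp add: powr_add besselI_coeff_def power_mult)
  then show ?thesis
    unfolding besselI_def besselI_series_def
    by (simp add: suminf_mult[OF summable_besselI_series[OF assms(2)]])
qed

definition dbesselI :: "real \<Rightarrow> real \<Rightarrow> real" where
  "dbesselI \<nu> z = \<nu> * (z/2) powr (\<nu> - 1) / 2 * besselI_series \<nu> ((z/2)^2)
    + dbesselI_series \<nu> ((z/2)^2) * (z/2) * (z/2) powr \<nu>"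

lemma besselI_has_real_derivative:
  assumes "z > 0" "\<nu> \<ge> 0"
  shows "(besselI \<nu> has_real_derivative dbesselI \<nu> z) (at z)"
proof -
  have "((\<lambda>z. (z/2) powr \<nu>) has_real_derivative \<nu> * (z/2) powr (\<nu> - 1) / 2) (at z)"
    using assms by (auto intro!: derivative_eq_intros)
  moreover have "((\<lambda>z. besselI_series \<nu> ((z/2)^2)) has_real_derivative
      dbesselI_series \<nu> ((z/2)^2) * (z/2)) (at z)"
    by (rule DERIV_chain2[OF besselI_series_has_real_derivative[OF assms(2)]])
       (auto intro!: derivative_eq_intros)
  ultimately have "((\<lambda>z. (z/2) powr \<nu> * besselI_series \<nu> ((z/2)^2)) has_real_derivative dbesselI \<nu> z) (at z)"
    unfolding dbesselI_def by (rule DERIV_mult)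
  then show ?thesis
    by (rule has_field_derivative_transform_within_open[where S = "{0<..}"])
       (use assms besselI_eq_series in auto)
qed

lemma besselI_bounds:
  assumes "z > 0" "\<nu> \<ge> 0"
  shows "0 \<le> besselI \<nu> z" "besselI \<nu> z \<le> (z/2) powr \<nu> * (exp ((z/2)^2) / Gamma (\<nu> + 1))"
    and "0 \<le> z * dbesselI \<nu> z"
    and "z * dbesselI \<nu> z \<le> (z/2) powr \<nu> * (exp ((z/2)^2) / Gamma (\<nu> + 1)) * (\<nu> + z^2/2)"
proof -
  define w where "w = (z/2)^2"
  note S = besselI_series_bounds[OF assms(2), of w]
  have P: "(z/2) powr \<nu> \<ge> 0"
    by simp
  show "0 \<le> besselI \<nu> z" "besselI \<nu> z \<le> (z/2) powr \<nu> * (exp ((z/2)^2) / Gamma (\<nu> + 1))"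
    unfolding besselI_eq_series[OF assms] using S(1) mult_left_mono[OF S(2) P] P by (simp_all add: w_def)
  have "(z/2) * (z/2) powr (\<nu> - 1) = (z/2) powr \<nu>"
    using assms by (simp add: powr_diff)
  then have e: "z * dbesselI \<nu> z = (z/2) powr \<nu> * (\<nu> * besselI_series \<nu> w + dbesselI_series \<nu> w * (z^2/2))"
    unfolding dbesselI_def w_def by (simp add: algebra_simps power2_eq_square)
  show "0 \<le> z * dbesselI \<nu> z"
    unfolding e using S assms by (simp add: w_def)
  have "\<nu> * besselI_series \<nu> w + dbesselI_series \<nu> w * (z^2/2)
      \<le> \<nu> * (exp w / Gamma (\<nu> + 1)) + exp w / Gamma (\<nu> + 1) * (z^2/2)"
    using S assms by (intro add_mono mult_left_mono mult_right_mono) (auto simp: w_def)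
  also have "\<dots> = exp w / Gamma (\<nu> + 1) * (\<nu> + z^2/2)"
    by (simp add: algebra_simps)
  finally show "z * dbesselI \<nu> z \<le> (z/2) powr \<nu> * (exp ((z/2)^2) / Gamma (\<nu> + 1)) * (\<nu> + z^2/2)"
    unfolding e w_def using mult_left_mono[OF _ P] by (simp only: mult.assoc)
qed

lemma continuous_on_besselI: "\<nu> \<ge> 0 \<Longrightarrow> continuous_on {0<..} (besselI \<nu>)"
  by (intro continuous_at_imp_continuous_on ballI DERIV_isCont[OF besselI_has_real_derivative]) auto

section \<open>Kernel (ii)\<close>

lemma besselI_mult_besselK_bounds:
  assumes "0 < a" "0 < b" "0 < \<nu>"
  shows "0 \<le> besselI \<nu> a * besselK \<nu> b"
    and "besselI \<nu> a * besselK \<nu> b \<le> exp ((a/2)^2) / \<nu> * (a/b) powr \<nu>"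
    and "0 \<le> a * dbesselI \<nu> a * besselK \<nu> b"
    and "a * dbesselI \<nu> a * besselK \<nu> b \<le> exp ((a/2)^2) * (\<nu> + a^2/2) / \<nu> * (a/b) powr \<nu>"
    and "\<bar>besselI \<nu> a * (b * dbesselK \<nu> b)\<bar> \<le> 2 * exp ((a/2)^2) * (a/b) powr \<nu>"
proof -
  have G: "Gamma (\<nu> + 1) = \<nu> * Gamma \<nu>" "Gamma \<nu> > 0" "Gamma \<nu> \<noteq> 0"
    using Gamma_plus1_real[OF assms(3)] Gamma_real_pos[OF assms(3)] by auto
  have r: "(a/2) powr \<nu> * (b/2) powr (-\<nu>) = (a/b) powr \<nu>"
    using assms by (simp add: powr_def ln_div exp_add[symmetric] algebra_simps)
  note I = besselI_bounds[OF assms(1) less_imp_le[OF assms(3)]]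
  note K = besselK_le[OF assms(2,3)] besselK_nonneg[OF assms(2,3)]
  show "0 \<le> besselI \<nu> a * besselK \<nu> b" "0 \<le> a * dbesselI \<nu> a * besselK \<nu> b"
    using I(1,3) K(2) by simp_all
  have "besselI \<nu> a * besselK \<nu> b
      \<le> (a/2) powr \<nu> * (exp ((a/2)^2) / Gamma (\<nu> + 1)) * ((b/2) powr (-\<nu>) * Gamma \<nu>)"
    using I(1,2) K by (intro mult_mono) auto
  also have "\<dots> = exp ((a/2)^2) / \<nu> * (a/b) powr \<nu>"
    unfolding r[symmetric] G(1) using G(3) assms by (simp add: field_simps)
  finally show "besselI \<nu> a * besselK \<nu> b \<le> exp ((a/2)^2) / \<nu> * (a/b) powr \<nu>" .
  have "a * dbesselI \<nu> a * besselK \<nu> b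
      \<le> (a/2) powr \<nu> * (exp ((a/2)^2) / Gamma (\<nu> + 1)) * (\<nu> + a^2/2) * ((b/2) powr (-\<nu>) * Gamma \<nu>)"
    by (rule mult_mono[OF I(4) K(1) order_trans[OF I(3) I(4)] K(2)])
  also have "\<dots> = exp ((a/2)^2) * (\<nu> + a^2/2) / \<nu> * (a/b) powr \<nu>"
    unfolding r[symmetric] G(1) using G(3) assms by (simp add: field_simps)
  finally show "a * dbesselI \<nu> a * besselK \<nu> b \<le> exp ((a/2)^2) * (\<nu> + a^2/2) / \<nu> * (a/b) powr \<nu>" .
  have "-(\<nu> + 1) = -\<nu> + -1"
    by simp
  then have "(b/2) powr (-(\<nu> + 1)) = (b/2) powr (-\<nu>) * (b/2) powr (-1)"
    by (simp only: powr_add)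
  then have b: "b * ((b/2) powr (-(\<nu> + 1)) * Gamma (\<nu> + 1)) = 2 * (b/2) powr (-\<nu>) * Gamma (\<nu> + 1)"
    using assms by (simp add: powr_minus field_simps)
  have "\<bar>besselI \<nu> a * (b * dbesselK \<nu> b)\<bar> = besselI \<nu> a * (b * \<bar>dbesselK \<nu> b\<bar>)"
    using I(1) assms by (simp add: abs_mult)
  also have "\<dots> \<le> (a/2) powr \<nu> * (exp ((a/2)^2) / Gamma (\<nu> + 1)) * (b * ((b/2) powr (-(\<nu> + 1)) * Gamma (\<nu> + 1)))"
    using I(1,2) abs_dbesselK_le[OF assms(2,3)] assms by (intro mult_mono mult_left_mono) auto
  also have "\<dots> = 2 * exp ((a/2)^2) * (a/b) powr \<nu>"
    unfolding b r[symmetric] using G assms by (simp add: field_simps)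
  finally show "\<bar>besselI \<nu> a * (b * dbesselK \<nu> b)\<bar> \<le> 2 * exp ((a/2)^2) * (a/b) powr \<nu>" .
qed

lemma kernel2_eq:
  assumes "0 < s" "0 < y"
  shows "kernel2 \<nu> \<beta> s y = sqrt (s * y) * (besselI \<nu> (\<beta> * min s y) * besselK \<nu> (\<beta> * max s y))"
  using assms by (auto simp: kernel2_def min_def max_def mult_ac)

definition dkernel2 :: "real \<Rightarrow> real \<Rightarrow> real \<Rightarrow> real \<Rightarrow> real" where
  "dkernel2 \<nu> \<beta> s y = sqrt y / sqrt s *
    (if y \<le> s then besselI \<nu> (\<beta> * y) * (besselK \<nu> (\<beta> * s) / 2 + \<beta> * s * dbesselK \<nu> (\<beta> * s))
     else (besselI \<nu> (\<beta> * s) / 2 + \<beta> * s * dbesselI \<nu> (\<beta> * s)) * besselK \<nu> (\<beta> * y))"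

lemma has_real_derivative_sqrt_mult_scaled:
  assumes "0 < s" "(g has_real_derivative g') (at (\<beta> * s))"
  shows "((\<lambda>t. sqrt t * g (\<beta> * t)) has_real_derivative (g (\<beta> * s) / 2 + \<beta> * s * g') / sqrt s) (at s)"
proof -
  have "((\<lambda>t. \<beta> * t) has_real_derivative \<beta>) (at s)"
    by (auto intro!: derivative_eq_intros)
  from DERIV_chain2[where g = "\<lambda>t. \<beta> * t", OF assms(2) this]
  have "((\<lambda>t. g (\<beta> * t)) has_real_derivative g' * \<beta>) (at s)" .
  from DERIV_mult[OF DERIV_real_sqrt[OF assms(1)] this]
  have "((\<lambda>t. sqrt t * g (\<beta> * t)) has_real_derivative
      inverse (sqrt s) / 2 * g (\<beta> * s) + g' * \<beta> * sqrt s) (at s)"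
    by (simp add: mult.commute)
  moreover have "inverse (sqrt s) / 2 * g (\<beta> * s) + g' * \<beta> * sqrt s
      = (g (\<beta> * s) / 2 + \<beta> * s * g') / sqrt s"
  proof -
    define r where "r = sqrt s"
    have "r > 0" "s = r^2"
      using assms(1) by (auto simp: r_def)
    then show ?thesis
      unfolding r_def[symmetric] by (simp add: field_simps power2_eq_square)
  qed
  ultimately show ?thesis
    by simp
qed

lemma kernel2_has_real_derivative:
  assumes "0 < \<beta>" "0 < \<nu>" "0 < s" "0 < y" "s \<noteq> y"
  shows "((\<lambda>s. kernel2 \<nu> \<beta> s y) has_real_derivative dkernel2 \<nu> \<beta> s y) (at s)"
proof (cases "y < s")
  case True
  have "((\<lambda>t. sqrt y * besselI \<nu> (\<beta> * y) * (sqrt t * besselK \<nu> (\<beta> * t))) has_real_derivative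
      dkernel2 \<nu> \<beta> s y) (at s)"
    using DERIV_cmult[OF has_real_derivative_sqrt_mult_scaled[OF assms(3)
        besselK_has_real_derivative[of "\<beta> * s" \<nu>]], of "sqrt y * besselI \<nu> (\<beta> * y)"] True assms
    by (simp add: dkernel2_def mult_ac)
  then show ?thesis
    by (rule has_field_derivative_transform_within_open[where S = "{y<..}"])
       (use True assms in \<open>auto simp: kernel2_def real_sqrt_mult\<close>)
next
  case False
  have "((\<lambda>t. sqrt y * besselK \<nu> (\<beta> * y) * (sqrt t * besselI \<nu> (\<beta> * t))) has_real_derivative
      dkernel2 \<nu> \<beta> s y) (at s)"
    using DERIV_cmult[OF has_real_derivative_sqrt_mult_scaled[OF assms(3)
        besselI_has_real_derivative[of "\<beta> * s" \<nu>]], of "sqrt y * besselK \<nu> (\<beta> * y)"] False assms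
    by (simp add: dkernel2_def mult_ac)
  then show ?thesis
    by (rule has_field_derivative_transform_within_open[where S = "{0<..<y}"])
       (use False assms in \<open>auto simp: kernel2_def real_sqrt_mult\<close>)
qed

lemma continuous_on_kernel2:
  assumes "0 < \<beta>" "0 < \<nu>" "0 < y"
  shows "continuous_on {0<..} (\<lambda>s. kernel2 \<nu> \<beta> s y)"
proof (rule continuous_on_eq)
  show "continuous_on {0<..} (\<lambda>s. sqrt (s * y) * (besselI \<nu> (\<beta> * min s y) * besselK \<nu> (\<beta> * max s y)))"
    using assms
    by (intro continuous_intros continuous_on_compose2[OF continuous_on_besselI[of \<nu>]]
        continuous_on_compose2[OF continuous_on_besselK[of \<nu>]]) auto
qed (use assms kernel2_eq in auto)

lemma abs_kernel2_le_power_weight: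
  assumes "0 < \<beta>" "0 < \<nu>" "0 < s" "0 < y" "y \<le> 1"
  shows "\<bar>kernel2 \<nu> \<beta> s y\<bar> \<le> exp (\<beta>^2/4) / \<nu> * power_weight \<nu> s y"
proof -
  define a b where "a = \<beta> * min s y" and "b = \<beta> * max s y"
  have ab: "0 < a" "0 < b" "a / b = min s y / max s y" "exp ((a/2)^2) \<le> exp (\<beta>^2/4)"
    using assms by (auto simp: a_def b_def power_divide intro!: power_mono mult_le_cancel_left1[THEN iffD2])
  note P = besselI_mult_besselK_bounds[OF ab(1,2) assms(2)]
  have "kernel2 \<nu> \<beta> s y = sqrt (s * y) * (besselI \<nu> a * besselK \<nu> b)"
    using assms by (simp add: kernel2_eq a_def b_def)
  then have "\<bar>kernel2 \<nu> \<beta> s y\<bar> = sqrt (s * y) * (besselI \<nu> a * besselK \<nu> b)"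
    using assms P(1) by simp
  also have "\<dots> \<le> sqrt (s * y) * (exp (\<beta>^2/4) / \<nu> * (a/b) powr \<nu>)"
    using P(2) ab(4) assms by (intro mult_left_mono order_trans[OF P(2)] mult_right_mono divide_right_mono) auto
  finally show ?thesis
    using ab(3) by (simp add: power_weight_def mult_ac)
qed

lemma besselI_besselK_derivative_combinations_le:
  assumes "0 < a" "0 < b" "a \<le> \<beta>" "1 \<le> \<nu>"
  defines "E \<equiv> exp (\<beta>^2/4)" and "R \<equiv> (a/b) powr \<nu>"
  shows "\<bar>besselI \<nu> a * (besselK \<nu> b / 2 + b * dbesselK \<nu> b)\<bar> \<le> E * (3 + \<beta>^2) * R"
    and "\<bar>(besselI \<nu> a / 2 + a * dbesselI \<nu> a) * besselK \<nu> b\<bar> \<le> E * (3 + \<beta>^2) * R"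
proof -
  have "\<nu> > 0" "E > 0" "R \<ge> 0"
    using assms by simp_all
  have "exp ((a/2)^2) \<le> E"
    using assms by (simp add: power_divide power_mono)
  note P = besselI_mult_besselK_bounds[OF assms(1,2) \<open>\<nu> > 0\<close>, folded R_def]
  have IK: "besselI \<nu> a * besselK \<nu> b \<le> E / \<nu> * R"
    using P(2) mult_right_mono[OF \<open>exp ((a/2)^2) \<le> E\<close>, of "R / \<nu>"] \<open>R \<ge> 0\<close> \<open>\<nu> > 0\<close> by simp
  have IdK: "\<bar>besselI \<nu> a * (b * dbesselK \<nu> b)\<bar> \<le> 2 * E * R"
    using P(5) mult_right_mono[OF \<open>exp ((a/2)^2) \<le> E\<close>, of "2 * R"] \<open>R \<ge> 0\<close> by simp
  have "exp ((a/2)^2) * (\<nu> + a^2/2) \<le> E * (\<nu> + \<beta>^2/2)"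
    using assms \<open>exp ((a/2)^2) \<le> E\<close> \<open>E > 0\<close> by (intro mult_mono add_left_mono divide_right_mono power_mono) auto
  then have dIK: "a * dbesselI \<nu> a * besselK \<nu> b \<le> E * (\<nu> + \<beta>^2/2) / \<nu> * R"
    using order_trans[OF P(4) mult_right_mono[OF divide_right_mono]] \<open>R \<ge> 0\<close> \<open>\<nu> > 0\<close> by simp
  have "\<bar>besselI \<nu> a * (besselK \<nu> b / 2 + b * dbesselK \<nu> b)\<bar>
      \<le> besselI \<nu> a * besselK \<nu> b / 2 + \<bar>besselI \<nu> a * (b * dbesselK \<nu> b)\<bar>"
    using P(1) abs_triangle_ineq[of "besselI \<nu> a * besselK \<nu> b / 2" "besselI \<nu> a * (b * dbesselK \<nu> b)"]
    by (simp add: algebra_simps)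
  also have "\<dots> \<le> E / \<nu> * R / 2 + 2 * E * R"
    using IK IdK by simp
  also have "\<dots> = (1 / (2 * \<nu>) + 2) * (E * R)"
    using \<open>\<nu> > 0\<close> by (simp add: field_simps)
  also have "\<dots> \<le> (3 + \<beta>^2) * (E * R)"
  proof (rule mult_right_mono)
    have "1 / (2 * \<nu>) \<le> 1"
      using assms by (simp add: field_simps)
    then show "1 / (2 * \<nu>) + 2 \<le> 3 + \<beta>^2"
      using zero_le_power2[of \<beta>] by linarith
  qed (use \<open>E > 0\<close> \<open>R \<ge> 0\<close> in simp)
  finally show "\<bar>besselI \<nu> a * (besselK \<nu> b / 2 + b * dbesselK \<nu> b)\<bar> \<le> E * (3 + \<beta>^2) * R"
    by (simp add: mult_ac)
  have "\<bar>(besselI \<nu> a / 2 + a * dbesselI \<nu> a) * besselK \<nu> b\<bar>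
      = besselI \<nu> a * besselK \<nu> b / 2 + a * dbesselI \<nu> a * besselK \<nu> b"
    using P(1,3) by (simp add: algebra_simps)
  also have "\<dots> \<le> E / \<nu> * R / 2 + E * (\<nu> + \<beta>^2/2) / \<nu> * R"
    using IK dIK by simp
  also have "\<dots> = (1 / (2 * \<nu>) + 1 + \<beta>^2 / (2 * \<nu>)) * (E * R)"
    using \<open>\<nu> > 0\<close> by (simp add: field_simps)
  also have "\<dots> \<le> (3 + \<beta>^2) * (E * R)"
  proof (rule mult_right_mono)
    have "1 / (2 * \<nu>) \<le> 1" "\<beta>^2 / (2 * \<nu>) \<le> \<beta>^2"
      using assms by (auto simp: field_simps)
    then show "1 / (2 * \<nu>) + 1 + \<beta>^2 / (2 * \<nu>) \<le> 3 + \<beta>^2"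
      by simp
  qed (use \<open>E > 0\<close> \<open>R \<ge> 0\<close> in simp)
  finally show "\<bar>(besselI \<nu> a / 2 + a * dbesselI \<nu> a) * besselK \<nu> b\<bar> \<le> E * (3 + \<beta>^2) * R"
    by (simp add: mult_ac)
qed

lemma mult_dkernel2_eq:
  assumes "0 < s" "0 < y"
  shows "s * dkernel2 \<nu> \<beta> s y = sqrt (s * y) *
    (if y \<le> s then besselI \<nu> (\<beta> * y) * (besselK \<nu> (\<beta> * s) / 2 + \<beta> * s * dbesselK \<nu> (\<beta> * s))
     else (besselI \<nu> (\<beta> * s) / 2 + \<beta> * s * dbesselI \<nu> (\<beta> * s)) * besselK \<nu> (\<beta> * y))"
proof -
  define r where "r = sqrt s"
  have "r > 0" "s = r^2"
    using assms by (auto simp: r_def)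
  then have "s * (sqrt y / sqrt s) = sqrt (s * y)"
    unfolding r_def[symmetric] by (simp add: real_sqrt_mult power2_eq_square)
  then show ?thesis
    unfolding dkernel2_def mult.assoc[symmetric] by simp
qed

lemma abs_dkernel2_le_power_weight:
  assumes "0 < \<beta>" "1 \<le> \<nu>" "0 < s" "0 < y" "y \<le> 1"
  shows "\<bar>s * dkernel2 \<nu> \<beta> s y\<bar> \<le> exp (\<beta>^2/4) * (3 + \<beta>^2) * power_weight \<nu> s y"
proof (cases "y \<le> s")
  case True
  have "\<bar>s * dkernel2 \<nu> \<beta> s y\<bar>
      = sqrt (s * y) * \<bar>besselI \<nu> (\<beta> * y) * (besselK \<nu> (\<beta> * s) / 2 + \<beta> * s * dbesselK \<nu> (\<beta> * s))\<bar>"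
    using assms True by (simp add: mult_dkernel2_eq abs_mult)
  also have "\<dots> \<le> sqrt (s * y) * (exp (\<beta>^2/4) * (3 + \<beta>^2) * ((\<beta> * y) / (\<beta> * s)) powr \<nu>)"
    using besselI_besselK_derivative_combinations_le(1)[of "\<beta> * y" "\<beta> * s" \<beta> \<nu>] assms True
    by (intro mult_left_mono) (auto simp: mult.assoc)
  also have "\<dots> = exp (\<beta>^2/4) * (3 + \<beta>^2) * power_weight \<nu> s y"
    using assms True by (simp add: power_weight_def min_absorb2 max_absorb1)
  finally show ?thesis .
next
  case False
  have "\<bar>s * dkernel2 \<nu> \<beta> s y\<bar>
      = sqrt (s * y) * \<bar>(besselI \<nu> (\<beta> * s) / 2 + \<beta> * s * dbesselI \<nu> (\<beta> * s)) * besselK \<nu> (\<beta> * y)\<bar>"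
    using assms False by (simp add: mult_dkernel2_eq abs_mult)
  also have "\<dots> \<le> sqrt (s * y) * (exp (\<beta>^2/4) * (3 + \<beta>^2) * ((\<beta> * s) / (\<beta> * y)) powr \<nu>)"
    using besselI_besselK_derivative_combinations_le(2)[of "\<beta> * s" "\<beta> * y" \<beta> \<nu>] assms False
    by (intro mult_left_mono) auto
  also have "\<dots> = exp (\<beta>^2/4) * (3 + \<beta>^2) * power_weight \<nu> s y"
    using assms False by (simp add: power_weight_def min_absorb1 max_absorb2)
  finally show ?thesis .
qed

lemma kernel2_decay:
  assumes "\<beta> > 0" "\<delta> > 0" "3/2 + \<delta> \<le> \<nu>" "L2_Rplus u" "\<forall>y>1. u y = 0" "x > 0"
  defines "C \<equiv> exp (\<beta>^2/4) * (3 + \<beta>^2)"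
  shows "cmod (intop (kernel2 \<nu> \<beta>) u x) \<le> C / \<nu> * L2norm u * x powr (-1-\<delta>) \<and>
    (\<exists>D. (intop (kernel2 \<nu> \<beta>) u has_vector_derivative D) (at x) \<and>
      cmod (x *\<^sub>R D) \<le> C * L2norm u * x powr (-1-\<delta>))"
proof (rule intop_decay_estimates[where dk = "dkernel2 \<nu> \<beta>", OF assms(4-6,2)])
  have "\<nu> \<ge> 1"
    using assms by simp
  have "C > 0"
    unfolding C_def by (intro mult_pos_pos add_pos_nonneg) auto
  show "kernel2 \<nu> \<beta> s \<in> borel_measurable lborel" "dkernel2 \<nu> \<beta> s \<in> borel_measurable lborel" for s
    unfolding kernel2_def dkernel2_def besselI_def besselK_def dbesselI_def dbesselK_def
      besselI_series_def dbesselI_series_def set_lebesgue_integral_def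
    by measurable
  show "\<bar>kernel2 \<nu> \<beta> x y\<bar> \<le> C / \<nu> * x powr (-1-\<delta>)" if "0 < y" "y \<le> 1" for y
  proof -
    have "exp (\<beta>^2/4) \<le> C"
      unfolding C_def by (simp add: add_increasing)
    then have "exp (\<beta>^2/4) / \<nu> * power_weight \<nu> x y \<le> C / \<nu> * x powr (-1-\<delta>)"
      using power_weight_le[OF assms(6) that assms(2,3)] power_weight_nonneg[OF assms(6) that(1)]
        \<open>\<nu> \<ge> 1\<close> \<open>C > 0\<close>
      by (intro mult_mono divide_right_mono) auto
    then show ?thesis
      using abs_kernel2_le_power_weight[OF assms(1) _ assms(6) that, of \<nu>] \<open>\<nu> \<ge> 1\<close> by simp
  qed
  show "\<bar>s * dkernel2 \<nu> \<beta> s y\<bar> \<le> C * s powr (-1-\<delta>)" if "0 < s" "0 < y" "y \<le> 1" for s y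
    using order_trans[OF abs_dkernel2_le_power_weight[OF assms(1) \<open>\<nu> \<ge> 1\<close> that]
        mult_left_mono[OF power_weight_le[OF that assms(2,3)]]] \<open>C > 0\<close>
    unfolding C_def by simp
qed (use assms kernel2_has_real_derivative continuous_on_kernel2 in auto)

theorem corollary5p4:
  fixes \<delta> :: real
  assumes "\<delta> > 0"
  shows
   "(\<exists>C>0. \<forall>\<nu> u. \<nu> \<ge> 3/2 + \<delta> \<longrightarrow> L2_Rplus u \<longrightarrow> (\<forall>y>1. u y = 0) \<longrightarrow>
       (\<forall>x>0. cmod (intop (kernel1 \<nu>) u x) \<le> C / \<nu> * L2norm u * x powr (-1 - \<delta>) \<and>
              (\<exists>D. (intop (kernel1 \<nu>) u has_vector_derivative D) (at x) \<and>
                   cmod (x *\<^sub>R D) \<le> C * L2norm u * x powr (-1 - \<delta>)))) \<and>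
    (\<forall>\<beta>>0. \<exists>C>0. \<forall>\<nu> u. \<nu> \<ge> 3/2 + \<delta> \<longrightarrow> L2_Rplus u \<longrightarrow> (\<forall>y>1. u y = 0) \<longrightarrow>
       (\<forall>x>0. cmod (intop (kernel2 \<nu> \<beta>) u x) \<le> C / \<nu> * L2norm u * x powr (-1 - \<delta>) \<and>
              (\<exists>D. (intop (kernel2 \<nu> \<beta>) u has_vector_derivative D) (at x) \<and>
                   cmod (x *\<^sub>R D) \<le> C * L2norm u * x powr (-1 - \<delta>))))"
proof (intro conjI allI impI)
  show "\<exists>C>0. \<forall>\<nu> u. \<nu> \<ge> 3/2 + \<delta> \<longrightarrow> L2_Rplus u \<longrightarrow> (\<forall>y>1. u y = 0) \<longrightarrow>
       (\<forall>x>0. cmod (intop (kernel1 \<nu>) u x) \<le> C / \<nu> * L2norm u * x powr (-1 - \<delta>) \<and>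
              (\<exists>D. (intop (kernel1 \<nu>) u has_vector_derivative D) (at x) \<and>
                   cmod (x *\<^sub>R D) \<le> C * L2norm u * x powr (-1 - \<delta>)))"
    using kernel1_decay[OF assms] by (intro exI[of _ 1]) auto
  fix \<beta> :: real
  assume "\<beta> > 0"
  show "\<exists>C>0. \<forall>\<nu> u. \<nu> \<ge> 3/2 + \<delta> \<longrightarrow> L2_Rplus u \<longrightarrow> (\<forall>y>1. u y = 0) \<longrightarrow>
       (\<forall>x>0. cmod (intop (kernel2 \<nu> \<beta>) u x) \<le> C / \<nu> * L2norm u * x powr (-1 - \<delta>) \<and>
              (\<exists>D. (intop (kernel2 \<nu> \<beta>) u has_vector_derivative D) (at x) \<and>
                   cmod (x *\<^sub>R D) \<le> C * L2norm u * x powr (-1 - \<delta>)))"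
    using kernel2_decay[OF \<open>\<beta> > 0\<close> assms]
    by (intro exI[of _ "exp (\<beta>^2/4) * (3 + \<beta>^2)"]) (auto intro!: mult_pos_pos add_pos_nonneg)
qed

end
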